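(* Assume Hypothesis (H). Let $b=b_1+b_2$ where $b_1,b_2:\mathbb R^n\times\mathbb R^n\to\mathbb R^n$ are bilinear with $b_i(x,y)\geq 0$ for all $x,y\geq 0$, and let $M=N-P$ where $N$ is an M-matrix and $P\geq 0$. Let $x_0$ satisfy $0\leq x_0\leq x_\ast$ and $F(x_0)\leq 0$ (e.g. $x_0=0$), and consider the iteration $$\big(N-b_1(\cdot,x_k)\big)x_{k+1}=a+Px_k+b_2(x_k,x_k),\quad k\geq 0.$$ Then: (1) $N-b_1(\cdot,x_k)$ is nonsingular for all $k$, so the iteration is well defined; (2) $x_k\leq x_{k+1}\leq x_\ast$ for all $k$, and $x_k\to x_\ast$ as $k\to\infty$; (3) $F(x_k)\leq 0$ for all $k$.
   Context: Inequalities between vectors/matrices are componentwise. A Z-matrix is a real square matrix with nonpositive off-diagonal entries; an M-matrix is a matrix $sI-P$ with $P\geq0$ entrywise and $s\geq\rho(P)$ ($\rho$ = spectral radius). Let $M\in\mathbb R^{n\times n}$ be a nonsingular M-matrix, $a\in\mathbb R^n$ with $a\geq 0$, and $b:\mathbb R^n\times\mathbb R^n\to\mathbb R^n$ a bilinear map (not necessarily symmetric) with $b(x,y)\geq 0$ whenever $x,y\geq 0$. A solution of $Mx=a+b(x,x)$ means a vector $x\geq 0$ satisfying it; a solution $x_\ast$ is minimal if $x_\ast\leq y$ for every solution $y$. $F(x):=Mx-a-b(x,x)$. For a bilinear map $c$ and $x\in\mathbb R^n$, $c(x,\cdot)$ and $c(\cdot,x)$ denote the $n\times n$ matrices of $y\mapsto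 c(x,y)$ and $y\mapsto c(y,x)$; $F'_x:=M-b(x,\cdot)-b(\cdot,x)$. Hypothesis (H): the equation has a minimal solution $x_\ast$, $x_\ast>0$ (all components strictly positive), and either $F'_{x_\ast}$ is nonsingular, or $F'_{x_\ast}$ is irreducible and $F'_x\neq F'_{x_\ast}$ for every $x$ with $0\leq x\leq x_\ast$, $x\neq x_\ast$. *)

theory Defs
  imports "HOL-Analysis.Analysis"
begin

definition complexify :: "real^'n^'m \<Rightarrow> complex^'n^'m" where
  "complexify A = (\<chi> i j. complex_of_real (A $ i $ j))"

definition spec_rad :: "real^'n^'n \<Rightarrow> real" where
  "spec_rad A = Sup {cmod c | c. \<exists>v::complex^'n. v \<noteq> 0 \<and> complexify A *v v = c *s v}"

definition M_matrix :: "real^'n^'n \<Rightarrow> bool" where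
  "M_matrix A \<longleftrightarrow> (\<exists>s (P::real^'n^'n). 0 \<le> P \<and> spec_rad P \<le> s \<and> A = s *\<^sub>R mat 1 - P)"

text \<open>Irreducible: no partition of the index set into nonempty I, J with A_ij = 0
for i in I, j in J (equivalently, not permutation-similar to block triangular form).\<close>
definition irreducible_mat :: "real^'n^'n \<Rightarrow> bool" where
  "irreducible_mat A \<longleftrightarrow>
     \<not> (\<exists>I. I \<noteq> {} \<and> I \<noteq> UNIV \<and> (\<forall>i\<in>I. \<forall>j\<in>-I. A $ i $ j = 0))"

definition is_solution ::
  "real^'n^'n \<Rightarrow> real^'n \<Rightarrow> (real^'n \<Rightarrow> real^'n \<Rightarrow> real^'n) \<Rightarrow> real^'n \<Rightarrow> bool" where
  "is_solution M a b x \<longleftrightarrow> 0 \<le> x \<and> M *v x = a + b x x"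

definition is_minimal_solution ::
  "real^'n^'n \<Rightarrow> real^'n \<Rightarrow> (real^'n \<Rightarrow> real^'n \<Rightarrow> real^'n) \<Rightarrow> real^'n \<Rightarrow> bool" where
  "is_minimal_solution M a b x \<longleftrightarrow>
     is_solution M a b x \<and> (\<forall>y. is_solution M a b y \<longrightarrow> x \<le> y)"

definition Fmap ::
  "real^'n^'n \<Rightarrow> real^'n \<Rightarrow> (real^'n \<Rightarrow> real^'n \<Rightarrow> real^'n) \<Rightarrow> real^'n \<Rightarrow> real^'n" where
  "Fmap M a b x = M *v x - a - b x x"

definition Fderiv ::
  "real^'n^'n \<Rightarrow> (real^'n \<Rightarrow> real^'n \<Rightarrow> real^'n) \<Rightarrow> real^'n \<Rightarrow> real^'n^'n" where
  "Fderiv M b x = M - matrix (b x) - matrix (\<lambda>y. b y x)"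

definition hypH ::
  "real^'n^'n \<Rightarrow> real^'n \<Rightarrow> (real^'n \<Rightarrow> real^'n \<Rightarrow> real^'n) \<Rightarrow> real^'n \<Rightarrow> bool" where
  "hypH M a b xs \<longleftrightarrow>
     is_minimal_solution M a b xs \<and> (\<forall>i. 0 < xs $ i) \<and>
     (invertible (Fderiv M b xs) \<or>
      (irreducible_mat (Fderiv M b xs) \<and>
       (\<forall>x. 0 \<le> x \<and> x \<le> xs \<and> x \<noteq> xs \<longrightarrow> Fderiv M b x \<noteq> Fderiv M b xs)))"

primrec iter_seq ::
  "real^'n^'n \<Rightarrow> real^'n^'n \<Rightarrow> real^'n \<Rightarrow> (real^'n \<Rightarrow> real^'n \<Rightarrow> real^'n)
   \<Rightarrow> (real^'n \<Rightarrow> real^'n \<Rightarrow> real^'n) \<Rightarrow> real^'n \<Rightarrow> nat \<Rightarrow> real^'n" where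
  "iter_seq N P a b1 b2 x0 0 = x0"
| "iter_seq N P a b1 b2 x0 (Suc k) =
     (let xk = iter_seq N P a b1 b2 x0 k in
      matrix_inv (N - matrix (\<lambda>y. b1 y xk)) *v (a + P *v xk + b2 xk xk))"

end

theory Submission
  imports Defs
begin

(* Write A_x = N - b1(., x).  The heart of the proof is that A_x is inverse-positive
   (A_x v >= 0 implies v >= 0) for every 0 <= x <= xs.  Granting this, a standard monotone
   iteration argument applies: from a subsolution x_k between 0 and the supersolution xs
   one step produces a subsolution x_{k+1} with x_k <= x_{k+1} <= xs; the sequence is
   increasing and bounded, so it converges, its limit solves the equation, and minimality
   of xs forces the limit to be xs.

   Inverse positivity of A_x is proved by contradiction: a counterexample v is shifted to
   z = v - t xs >= 0 (t < 0) with a zero entry; analysing the rows on the zero set of z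
   shows that halving xs there yields a supersolution which is not above xs.  This
   contradicts the comparison principle "the minimal solution lies below every
   supersolution", itself a consequence of the monotone iteration with the trivial
   splitting. *)

(* Z-matrices: nonpositive off-diagonal entries.  M-matrices are Z-matrices, and this
   sign pattern is the only property of M and N the argument uses. *)
definition Z_matrix :: "real^'n^'n \<Rightarrow> bool" where
  "Z_matrix A \<longleftrightarrow> (\<forall>i j. i \<noteq> j \<longrightarrow> A$i$j \<le> 0)"

(* Inverse positivity (monotonicity) of a matrix: A v >= 0 forces v >= 0.  This is the
   order-theoretic substitute for "A is a nonsingular M-matrix" used throughout. *)
definition inverse_positive :: "real^'n^'n \<Rightarrow> bool" where
  "inverse_positive A \<longleftrightarrow> (\<forall>v. 0 \<le> A *v v \<longrightarrow> 0 \<le> v)"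

definition nonneg_bilinear :: "(real^'n \<Rightarrow> real^'n \<Rightarrow> real^'n) \<Rightarrow> bool" where
  "nonneg_bilinear h \<longleftrightarrow> bilinear h \<and> (\<forall>x y. 0 \<le> x \<longrightarrow> 0 \<le> y \<longrightarrow> 0 \<le> h x y)"

definition supersolution ::
  "real^'n^'n \<Rightarrow> real^'n \<Rightarrow> (real^'n \<Rightarrow> real^'n \<Rightarrow> real^'n) \<Rightarrow> real^'n \<Rightarrow> bool" where
  "supersolution M a b y \<longleftrightarrow> 0 \<le> y \<and> a + b y y \<le> M *v y"

abbreviation iter_matrix ::
  "real^'n^'n \<Rightarrow> (real^'n \<Rightarrow> real^'n \<Rightarrow> real^'n) \<Rightarrow> real^'n \<Rightarrow> real^'n^'n" where
  "iter_matrix N b1 x \<equiv> N - matrix (\<lambda>y. b1 y x)"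

lemma vec_le_iff: "(x::real^'n) \<le> y \<longleftrightarrow> (\<forall>i. x$i \<le> y$i)"
  by (simp add: less_eq_vec_def)

lemma nonneg_bilinear_mono:
  assumes h: "nonneg_bilinear h" and "0 \<le> u" "u \<le> u'" "0 \<le> v" "v \<le> v'"
  shows "h u v \<le> h u' v'"
proof -
  have "0 \<le> u' - u" "0 \<le> v' - v" "0 \<le> v'"
    using assms(2-5) by (auto simp: vec_le_iff intro: order_trans)
  then have "0 \<le> h (u' - u) v'" "0 \<le> h u (v' - v)"
    using h \<open>0 \<le> u\<close> by (auto simp: nonneg_bilinear_def)
  moreover have "h u' v' = h (u' - u) v' + h u (v' - v) + h u v"
    using h by (simp add: nonneg_bilinear_def bilinear_lsub bilinear_rsub)
  ultimately show ?thesis by (auto simp: vec_le_iff)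
qed

lemma nonneg_bilinear_add:
  "nonneg_bilinear f \<Longrightarrow> nonneg_bilinear g \<Longrightarrow> nonneg_bilinear (\<lambda>x y. f x y + g x y)"
  unfolding nonneg_bilinear_def bilinear_def by (auto intro: linear_compose_add add_nonneg_nonneg)

lemma nonneg_bilinear_zero: "nonneg_bilinear (\<lambda>x y. 0)"
  by (simp add: nonneg_bilinear_def bilinear_def linear_zero)

lemma nonneg_matrix_mono:
  fixes P :: "real^'n^'n"
  assumes "0 \<le> P" "u \<le> v"
  shows "P *v u \<le> P *v v"
  using assms unfolding matrix_vector_mult_def
  by (auto intro!: sum_mono mult_left_mono simp: vec_le_iff less_eq_vec_def)

lemma M_matrix_imp_Z_matrix: "M_matrix A \<Longrightarrow> Z_matrix A"
  unfolding M_matrix_def Z_matrix_def by (auto simp: mat_def less_eq_vec_def)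

lemma iter_matrix_mult:
  assumes "bilinear b1"
  shows "iter_matrix N b1 x *v v = N *v v - b1 v x"
proof -
  have "linear (\<lambda>y. b1 y x)" using assms by (simp add: bilinear_def)
  then show ?thesis
    by (simp add: matrix_vector_mult_diff_rdistrib matrix_works)
qed

lemma iter_matrix_zero: "iter_matrix N (\<lambda>x y. 0) x = N"
  by (simp add: matrix_def vec_eq_iff)

lemma matrix_inv_right:
  fixes A :: "real^'n^'n"
  assumes "invertible A"
  shows "A *v (matrix_inv A *v c) = c"
proof -
  have "A ** matrix_inv A = mat 1"
    using assms unfolding invertible_def matrix_inv_def by (rule someI2_ex) auto
  then show ?thesis by (simp add: matrix_vector_mul_assoc)
qed

(* Inverse positivity implies injectivity (apply it to v and -v), hence invertibility. *)
lemma inverse_positive_imp_invertible: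
  fixes A :: "real^'n^'n"
  assumes "inverse_positive A"
  shows "invertible A"
proof -
  have "v = 0" if "A *v v = 0" for v
  proof -
    have "A *v (- v) = 0" using that matrix_vector_mult_diff_distrib[of A 0 v] by simp
    then have "0 \<le> - v" using assms unfolding inverse_positive_def by (metis order_refl)
    moreover have "0 \<le> v" using assms that unfolding inverse_positive_def by simp
    ultimately show "v = 0" by simp
  qed
  then show ?thesis by (simp add: invertible_left_inverse matrix_left_invertible_ker)
qed

subsection \<open>Inverse positivity of Z-matrices\<close>

(* If x has a negative entry and v > 0, then moving from x in direction -v by the
   minimal ratio t = min x_i / v_i < 0 reaches the boundary of the nonnegative cone. *)
lemma shift_to_boundary:
  fixes x v :: "real^'n"
  assumes v: "\<forall>i. 0 < v$i" and x: "\<not> 0 \<le> x"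
  obtains t i where "t < 0" "0 \<le> x - t *\<^sub>R v" "(x - t *\<^sub>R v)$i = 0"
proof -
  define t where "t = Min (range (\<lambda>i. x$i / v$i))"
  have fin: "finite (range (\<lambda>i. x$i / v$i))" by simp
  obtain i where ti: "t = x$i / v$i" using Min_in[OF fin] unfolding t_def by blast
  have t_le: "t \<le> x$k / v$k" for k unfolding t_def using fin by auto
  obtain j where "x$j < 0" using x by (auto simp: vec_le_iff not_le)
  then have "t < 0" using t_le[of j] v divide_neg_pos[of "x$j" "v$j"] by force
  moreover have "0 \<le> x - t *\<^sub>R v"
    using t_le v by (auto simp: vec_le_iff pos_le_divide_eq)
  moreover have "(x - t *\<^sub>R v)$i = 0" using ti v[rule_format, of i] by simp
  ultimately show ?thesis using that by blast
qed

lemma Z_matrix_row_at_zero: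
  fixes A :: "real^'n^'n" and z :: "real^'n"
  assumes Z: "Z_matrix A" and z: "0 \<le> z" "z$i = 0"
  shows "(A *v z)$i \<le> 0"
    and "(A *v z)$i = 0 \<Longrightarrow> z$j \<noteq> 0 \<Longrightarrow> A$i$j = 0"
proof -
  have terms: "A$i$j * z$j \<le> 0" for j
    using Z z by (cases "j = i") (auto simp: Z_matrix_def vec_le_iff mult_nonpos_nonneg)
  then show "(A *v z)$i \<le> 0" by (simp add: matrix_vector_mult_def sum_nonpos)
  assume "(A *v z)$i = 0" "z$j \<noteq> 0"
  then have "(\<Sum>j\<in>UNIV. - (A$i$j * z$j)) = 0"
    by (simp add: matrix_vector_mult_def sum_negf)
  then have "\<forall>j. A$i$j * z$j = 0"
    using sum_nonneg_eq_0_iff[of UNIV "\<lambda>j. - (A$i$j * z$j)"] terms by simp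
  then show "A$i$j = 0" using \<open>z$j \<noteq> 0\<close> by auto
qed

(* For a Z-matrix with A v >= 0 for some v > 0, A x >= 0 implies x >= 0 whenever in every
   row A x or A v is strictly positive; otherwise the boundary shift gives a contradiction. *)
lemma Z_matrix_nonneg_by_positive_vector:
  fixes A :: "real^'n^'n" and x v :: "real^'n"
  assumes Z: "Z_matrix A" and v: "\<forall>i. 0 < v$i" "0 \<le> A *v v"
    and x: "0 \<le> A *v x" "\<forall>i. 0 < (A *v x)$i \<or> 0 < (A *v v)$i"
  shows "0 \<le> x"
proof (rule ccontr)
  assume "\<not> 0 \<le> x"
  then obtain t i where t: "t < 0" "0 \<le> x - t *\<^sub>R v" "(x - t *\<^sub>R v)$i = 0"
    using shift_to_boundary v(1) by metis
  have "(A *v (x - t *\<^sub>R v))$i = (A *v x)$i - t * (A *v v)$i"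
    by (simp add: matrix_vector_mult_diff_distrib matrix_vector_mult_scaleR)
  moreover have "0 \<le> (A *v x)$i" "0 \<le> (A *v v)$i" "0 < (A *v x)$i \<or> 0 < (A *v v)$i"
    using x v by (auto simp: vec_le_iff)
  ultimately have "0 < (A *v (x - t *\<^sub>R v))$i"
    using t(1) by (smt (verit, best) mult_neg_pos mult_nonpos_nonneg)
  then show False using Z_matrix_row_at_zero(1)[OF Z t(2,3)] by simp
qed

(* Classical criterion: an invertible Z-matrix with A v >= 0 for some v > 0 is
   inverse-positive.  Adding g = A^-1 1 >= 0 to v makes A (v + g) strictly positive. *)
lemma Z_matrix_inverse_positive:
  fixes A :: "real^'n^'n" and v :: "real^'n"
  assumes Z: "Z_matrix A" and inv: "invertible A" and v: "\<forall>i. 0 < v$i" "0 \<le> A *v v"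
  shows "inverse_positive A"
  unfolding inverse_positive_def
proof (intro allI impI)
  fix x assume x: "0 \<le> A *v x"
  define g where "g = matrix_inv A *v 1"
  have Ag: "A *v g = 1" unfolding g_def using matrix_inv_right[OF inv] .
  have "0 \<le> g" by (rule Z_matrix_nonneg_by_positive_vector[OF Z v]) (auto simp: Ag vec_le_iff)
  then have "\<forall>i. 0 < (v + g)$i" using v(1) by (auto simp: vec_le_iff add_pos_nonneg)
  moreover have "\<forall>i. 0 < (A *v (v + g))$i"
    using v(2) by (auto simp: matrix_vector_right_distrib Ag vec_le_iff add_nonneg_pos)
  ultimately show "0 \<le> x"
    using x by (intro Z_matrix_nonneg_by_positive_vector[OF Z, of "v + g" x])
      (auto simp: vec_le_iff less_imp_le)
qed

lemma Z_matrix_row_mono: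
  fixes M :: "real^'n^'n"
  assumes Z: "Z_matrix M" and "y \<le> x" "y$i = x$i"
  shows "(M *v x)$i \<le> (M *v y)$i"
proof -
  have "0 \<le> M$i$j * (y$j - x$j)" for j
    using assms by (cases "j = i") (auto simp: Z_matrix_def vec_le_iff mult_nonpos_nonpos)
  then have "0 \<le> (\<Sum>j\<in>UNIV. M$i$j * (y$j - x$j))" by (rule sum_nonneg)
  then show ?thesis
    by (simp add: matrix_vector_mult_def sum_subtractf right_diff_distrib)
qed

lemma matrix_row_vanishes:
  fixes N :: "real^'n^'n"
  assumes "\<And>j. r$j \<noteq> 0 \<Longrightarrow> N$i$j = 0"
  shows "(N *v r)$i = 0"
  unfolding matrix_vector_mult_def using assms by (auto intro!: sum.neutral)

lemma dominated_by_support: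
  fixes r z :: "real^'n"
  assumes "0 \<le> z" "0 \<le> r" "\<And>j. z$j = 0 \<Longrightarrow> r$j = 0"
  obtains c where "r \<le> c *\<^sub>R z"
proof
  define c where "c = (\<Sum>j\<in>UNIV. if z$j = 0 then 0 else r$j / z$j)"
  show "r \<le> c *\<^sub>R z"
    unfolding vec_le_iff
  proof
    fix j
    show "r$j \<le> (c *\<^sub>R z)$j"
    proof (cases "z$j = 0")
      case False
      then have zj: "0 < z$j" using assms(1) by (auto simp: vec_le_iff less_le)
      have "r$j / z$j \<le> c" unfolding c_def
        using member_le_sum[of j UNIV "\<lambda>j. if z$j = 0 then 0 else r$j / z$j"] False assms(1,2)
        by (force simp: vec_le_iff)
      then show ?thesis using zj by (simp add: divide_le_eq)
    qed (use assms(3) in simp)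
  qed
qed

subsection \<open>The monotone iteration\<close>

lemma bounded_monotone_convergent:
  fixes s :: "nat \<Rightarrow> real^'n"
  assumes inc: "\<And>k. s k \<le> s (Suc k)" and bd: "\<And>k. s k \<le> y"
  obtains z where "s \<longlonglongrightarrow> z" "z \<le> y" "\<And>k. s k \<le> z"
proof
  define z where "z = (\<chi> i. SUP k. s k $ i)"
  have incs: "incseq (\<lambda>k. s k $ i)" for i
    using inc by (intro incseq_SucI) (auto simp: vec_le_iff)
  have bdd: "bdd_above (range (\<lambda>k. s k $ i))" for i
    using bd by (auto simp: vec_le_iff bdd_above_def)
  have "(\<lambda>k. s k $ i) \<longlonglongrightarrow> z $ i" for i
    unfolding z_def using LIMSEQ_incseq_SUP[OF bdd incs] by simp
  then show "s \<longlonglongrightarrow> z" by (rule vec_tendstoI)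
  show "z \<le> y" unfolding vec_le_iff z_def using bd by (auto simp: vec_le_iff intro!: cSUP_least)
  show "s k \<le> z" for k unfolding vec_le_iff z_def using bdd by (auto intro!: cSUP_upper)
qed

lemma iteration_step:
  fixes N P M :: "real^'n^'n" and a y xk :: "real^'n"
    and b1 b2 :: "real^'n \<Rightarrow> real^'n \<Rightarrow> real^'n"
  assumes b1: "nonneg_bilinear b1" and b2: "nonneg_bilinear b2"
    and P: "0 \<le> P" and MNP: "M = N - P"
    and y: "supersolution M a (\<lambda>x y. b1 x y + b2 x y) y"
    and xk: "0 \<le> xk" "xk \<le> y" "M *v xk \<le> a + b1 xk xk + b2 xk xk"
    and A: "inverse_positive (iter_matrix N b1 xk)"
  defines "x' \<equiv> matrix_inv (iter_matrix N b1 xk) *v (a + P *v xk + b2 xk xk)"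
  shows "iter_matrix N b1 xk *v x' = a + P *v xk + b2 xk xk"
    and "xk \<le> x'" and "x' \<le> y" and "M *v x' \<le> a + b1 x' x' + b2 x' x'"
proof -
  let ?A = "iter_matrix N b1 xk"
  have lin: "bilinear b1" using b1 by (simp add: nonneg_bilinear_def)
  show eq: "?A *v x' = a + P *v xk + b2 xk xk"
    unfolding x'_def by (rule matrix_inv_right[OF inverse_positive_imp_invertible[OF A]])
  then have eqN: "N *v x' = a + P *v xk + b2 xk xk + b1 x' xk"
    unfolding iter_matrix_mult[OF lin] by (simp add: diff_eq_eq)
  have A_eq: "?A *v u = M *v u + P *v u - b1 u xk" for u
    by (simp only: iter_matrix_mult[OF lin]) (simp add: MNP matrix_vector_mult_diff_rdistrib)
  have "?A *v (x' - xk) = ?A *v x' - ?A *v xk" by (simp add: matrix_vector_mult_diff_distrib)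
  also have "\<dots> = a + b1 xk xk + b2 xk xk - M *v xk"
    unfolding eq A_eq[of xk] by (simp add: algebra_simps)
  finally have "0 \<le> ?A *v (x' - xk)" using xk(3) by (simp add: vec_le_iff)
  then have "0 \<le> x' - xk" using A unfolding inverse_positive_def by blast
  then show x'_ge: "xk \<le> x'" by (simp add: vec_le_iff)
  have y0: "0 \<le> y" and y_super: "a + b1 y y + b2 y y \<le> M *v y"
    using y by (auto simp: supersolution_def add.assoc)
  have "?A *v (y - x') = ?A *v y - ?A *v x'" by (simp add: matrix_vector_mult_diff_distrib)
  also have "\<dots> = M *v y + P *v y - b1 y xk - (a + P *v xk + b2 xk xk)"
    unfolding eq A_eq[of y] ..
  finally have "?A *v (y - x') = M *v y + P *v y - b1 y xk - (a + P *v xk + b2 xk xk)" .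
  moreover have "b1 y xk \<le> b1 y y" "b2 xk xk \<le> b2 y y" "P *v xk \<le> P *v y"
    using nonneg_bilinear_mono[OF b1 y0 order_refl xk(1,2)]
      nonneg_bilinear_mono[OF b2 xk(1,2) xk(1,2)] nonneg_matrix_mono[OF P xk(2)] by auto
  ultimately have "0 \<le> ?A *v (y - x')"
    using y_super by (simp add: vec_le_iff) (smt (verit))
  then have "0 \<le> y - x'" using A unfolding inverse_positive_def by blast
  then show "x' \<le> y" by (simp add: vec_le_iff)
  have x'0: "0 \<le> x'" using xk(1) x'_ge by (rule order_trans)
  have "b1 x' xk \<le> b1 x' x'" "b2 xk xk \<le> b2 x' x'" "P *v xk \<le> P *v x'"
    using nonneg_bilinear_mono[OF b1 x'0 order_refl xk(1) x'_ge]
      nonneg_bilinear_mono[OF b2 xk(1) x'_ge xk(1) x'_ge] nonneg_matrix_mono[OF P x'_ge] by auto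
  moreover have "M *v x' = a + P *v xk + b2 xk xk + b1 x' xk - P *v x'"
    using eqN MNP by (simp add: matrix_vector_mult_diff_rdistrib)
  ultimately show "M *v x' \<le> a + b1 x' x' + b2 x' x'"
    by (simp add: vec_le_iff) (smt (verit))
qed

lemma iteration_monotone:
  fixes N P M :: "real^'n^'n" and a y x0 :: "real^'n"
    and b1 b2 :: "real^'n \<Rightarrow> real^'n \<Rightarrow> real^'n"
  assumes b1: "nonneg_bilinear b1" and b2: "nonneg_bilinear b2"
    and P: "0 \<le> P" and MNP: "M = N - P"
    and y: "supersolution M a (\<lambda>x y. b1 x y + b2 x y) y"
    and x0: "0 \<le> x0" "x0 \<le> y" "M *v x0 \<le> a + b1 x0 x0 + b2 x0 x0"
    and A: "\<forall>x\<in>{0..y}. inverse_positive (iter_matrix N b1 x)"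
  defines "X \<equiv> iter_seq N P a b1 b2 x0"
  shows "0 \<le> X k \<and> X k \<le> X (Suc k) \<and> X (Suc k) \<le> y
         \<and> M *v X k \<le> a + b1 (X k) (X k) + b2 (X k) (X k)
         \<and> iter_matrix N b1 (X k) *v X (Suc k) = a + P *v X k + b2 (X k) (X k)"
proof -
  have X_Suc: "X (Suc k) = matrix_inv (iter_matrix N b1 (X k)) *v (a + P *v X k + b2 (X k) (X k))"
    for k unfolding X_def by (simp add: Let_def)
  have step: "X k \<le> X (Suc k) \<and> X (Suc k) \<le> y
      \<and> M *v X (Suc k) \<le> a + b1 (X (Suc k)) (X (Suc k)) + b2 (X (Suc k)) (X (Suc k))
      \<and> iter_matrix N b1 (X k) *v X (Suc k) = a + P *v X k + b2 (X k) (X k)"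
    if "0 \<le> X k" "X k \<le> y" "M *v X k \<le> a + b1 (X k) (X k) + b2 (X k) (X k)" for k
  proof -
    have "inverse_positive (iter_matrix N b1 (X k))" using A that by simp
    from iteration_step[OF b1 b2 P MNP y that this] show ?thesis by (simp add: X_Suc)
  qed
  have invariant: "0 \<le> X k \<and> X k \<le> y \<and> M *v X k \<le> a + b1 (X k) (X k) + b2 (X k) (X k)" for k
  proof (induction k)
    case 0
    then show ?case using x0 by (simp add: X_def)
  next
    case (Suc k)
    then show ?case using step[of k] by (auto intro: order_trans)
  qed
  then show ?thesis using step by simp
qed

(* Under the same hypotheses the iterates converge, and passing to the limit in
   N x_{k+1} - b1(x_{k+1}, x_k) = a + P x_k + b2(x_k, x_k) shows that the limit solves
   the equation. *)
lemma iteration_limit: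
  fixes N P M :: "real^'n^'n" and a y x0 :: "real^'n"
    and b1 b2 :: "real^'n \<Rightarrow> real^'n \<Rightarrow> real^'n"
  assumes b1: "nonneg_bilinear b1" and b2: "nonneg_bilinear b2"
    and P: "0 \<le> P" and MNP: "M = N - P"
    and y: "supersolution M a (\<lambda>x y. b1 x y + b2 x y) y"
    and x0: "0 \<le> x0" "x0 \<le> y" "M *v x0 \<le> a + b1 x0 x0 + b2 x0 x0"
    and A: "\<forall>x\<in>{0..y}. inverse_positive (iter_matrix N b1 x)"
  defines "X \<equiv> iter_seq N P a b1 b2 x0"
  obtains z where "X \<longlonglongrightarrow> z" "z \<le> y" "is_solution M a (\<lambda>x y. b1 x y + b2 x y) z"
proof -
  note mono = iteration_monotone[OF b1 b2 P MNP y x0 A, folded X_def]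
  have inc: "X k \<le> X (Suc k)" and bd: "X k \<le> y" for k
    using mono[of k] by (auto intro: order_trans)
  obtain z where z: "X \<longlonglongrightarrow> z" "z \<le> y" "\<And>k. X k \<le> z"
    using bounded_monotone_convergent[of X y, OF inc bd] by blast
  have z0: "0 \<le> z" using mono[of 0] z(3)[of 0] by (auto intro: order_trans)
  have bb: "bounded_bilinear b1" "bounded_bilinear b2"
    using b1 b2 bilinear_conv_bounded_bilinear by (auto simp: nonneg_bilinear_def)
  have zS: "(\<lambda>k. X (Suc k)) \<longlonglongrightarrow> z" using LIMSEQ_Suc[OF z(1)] .
  have lhs: "(\<lambda>k. N *v X (Suc k) - b1 (X (Suc k)) (X k)) \<longlonglongrightarrow> N *v z - b1 z z"
    by (intro tendsto_diff bounded_linear.tendsto[OF matrix_vector_mul_bounded_linear zS]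
        bounded_bilinear.tendsto[OF bb(1) zS z(1)])
  have rhs: "(\<lambda>k. a + P *v X k + b2 (X k) (X k)) \<longlonglongrightarrow> a + P *v z + b2 z z"
    by (intro tendsto_add tendsto_const bounded_linear.tendsto[OF matrix_vector_mul_bounded_linear z(1)]
        bounded_bilinear.tendsto[OF bb(2) z(1) z(1)])
  have "N *v X (Suc k) - b1 (X (Suc k)) (X k) = a + P *v X k + b2 (X k) (X k)" for k
    using mono[of k] b1 by (simp add: iter_matrix_mult nonneg_bilinear_def)
  then have "N *v z - b1 z z = a + P *v z + b2 z z"
    using LIMSEQ_unique[OF lhs] rhs by simp
  then have Nz: "N *v z = a + P *v z + b2 z z + b1 z z" by (simp add: diff_eq_eq)
  have "M *v z = N *v z - P *v z" using MNP by (simp add: matrix_vector_mult_diff_rdistrib)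
  also have "\<dots> = a + b1 z z + b2 z z" unfolding Nz by (simp add: algebra_simps)
  finally have "M *v z = a + b1 z z + b2 z z" .
  with z z0 show ?thesis using that by (simp add: is_solution_def)
qed

(* M itself
   is inverse-positive (M xs >= 0 with xs > 0), so the fixed-point iteration with the
   trivial splitting N = M, P = 0, b1 = 0 applies and yields a solution below y. *)
lemma minimal_solution_below_supersolution:
  fixes M :: "real^'n^'n" and a xs y :: "real^'n" and b :: "real^'n \<Rightarrow> real^'n \<Rightarrow> real^'n"
  assumes Z: "Z_matrix M" and inv: "invertible M" and b: "nonneg_bilinear b" and a: "0 \<le> a"
    and xs: "is_minimal_solution M a b xs" "\<forall>i. 0 < xs$i"
    and y: "supersolution M a b y"
  shows "xs \<le> y"
proof -
  have Mxs: "M *v xs = a + b xs xs" "0 \<le> xs"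
    using xs(1) by (auto simp: is_minimal_solution_def is_solution_def)
  then have "0 \<le> M *v xs"
    using a b by (simp add: nonneg_bilinear_def add_nonneg_nonneg)
  then have "inverse_positive M" using Z_matrix_inverse_positive[OF Z inv xs(2)] by blast
  then have A: "\<forall>x\<in>{0..y}. inverse_positive (iter_matrix M (\<lambda>x y. 0) x)"
    by (simp add: iter_matrix_zero)
  have y': "supersolution M a (\<lambda>x y. 0 + b x y) y" and y0: "0 \<le> y"
    using y by (simp_all add: supersolution_def)
  have sub0: "M *v 0 \<le> a + 0 + b 0 0"
    using a b by (simp add: nonneg_bilinear_def bilinear_lzero)
  obtain z where "z \<le> y" "is_solution M a (\<lambda>x y. 0 + b x y) z"
    using iteration_limit[OF nonneg_bilinear_zero b order_refl diff_zero[symmetric] y' order_refl y0 sub0 A]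
    by blast
  then show ?thesis using xs(1) by (auto simp: is_minimal_solution_def intro: order_trans)
qed

subsection \<open>Inverse positivity of the iteration matrices\<close>

lemma iter_matrix_row_at_zero:
  fixes N :: "real^'n^'n" and x z :: "real^'n"
  assumes Z: "Z_matrix N" and b1: "nonneg_bilinear b1" and x: "0 \<le> x"
    and z: "0 \<le> z" "z$i = 0" and row: "0 \<le> (iter_matrix N b1 x *v z)$i"
  shows "(iter_matrix N b1 x *v z)$i = 0" and "(b1 z x)$i = 0"
    and "\<And>j. z$j \<noteq> 0 \<Longrightarrow> N$i$j = 0"
proof -
  have Az: "(iter_matrix N b1 x *v z)$i = (N *v z)$i - (b1 z x)$i"
    using b1 by (simp add: iter_matrix_mult nonneg_bilinear_def)
  have "(N *v z)$i \<le> 0" using Z_matrix_row_at_zero(1)[OF Z z] .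
  moreover have "0 \<le> (b1 z x)$i" using b1 z(1) x by (simp add: nonneg_bilinear_def vec_le_iff)
  ultimately have "(N *v z)$i = 0" "(b1 z x)$i = 0" using row Az by linarith+
  then show "(iter_matrix N b1 x *v z)$i = 0" "(b1 z x)$i = 0"
    and "\<And>j. z$j \<noteq> 0 \<Longrightarrow> N$i$j = 0"
    using Az Z_matrix_row_at_zero(2)[OF Z z] by simp_all
qed

(* At a solution xs, (N - b1(., x)) xs is a sum of terms that are nonnegative for
   0 <= x <= xs. *)
lemma iter_matrix_at_solution:
  fixes M N P :: "real^'n^'n"
  assumes b1: "bilinear b1" and MNP: "M = N - P" and xs: "M *v xs = a + b1 xs xs + b2 xs xs"
  shows "iter_matrix N b1 x *v xs = a + P *v xs + b2 xs xs + b1 xs (xs - x)"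
proof -
  have "iter_matrix N b1 x *v xs = M *v xs + P *v xs - b1 xs x"
    by (simp only: iter_matrix_mult[OF b1]) (simp add: MNP matrix_vector_mult_diff_rdistrib)
  then show ?thesis
    unfolding xs bilinear_rsub[OF b1] by (simp add: algebra_simps)
qed

lemma nonneg_bilinear_row_on_support:
  fixes x xs r z :: "real^'n"
  assumes b1: "nonneg_bilinear b1" and x: "0 \<le> x" "x \<le> xs"
    and r: "0 \<le> r" "r \<le> xs" "r \<le> c *\<^sub>R z"
    and rows: "(b1 z x)$i = 0" "(b1 xs (xs - x))$i = 0"
  shows "(b1 r xs)$i \<le> 0"
proof -
  have lin: "bilinear b1" using b1 by (simp add: nonneg_bilinear_def)
  have "0 \<le> xs - x" using x by (simp add: vec_le_iff)
  then have "b1 r (xs - x) \<le> b1 xs (xs - x)"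
    using nonneg_bilinear_mono[OF b1 r(1,2)] by simp
  moreover have "b1 r x \<le> b1 (c *\<^sub>R z) x"
    using nonneg_bilinear_mono[OF b1 r(1,3) x(1) order_refl] .
  moreover have "b1 r xs = b1 r x + b1 r (xs - x)" by (simp add: bilinear_rsub[OF lin])
  moreover have "(b1 (c *\<^sub>R z) x)$i = 0" using rows(1) by (simp add: bilinear_lmul[OF lin])
  ultimately show ?thesis using rows(2) by (simp add: vec_le_iff) (smt (verit))
qed

(* Off the zero set, monotonicity suffices; on it, both sides
   are computed explicitly. *)
lemma halving_supersolution:
  fixes M N P :: "real^'n^'n" and a xs x z :: "real^'n"
    and b1 b2 :: "real^'n \<Rightarrow> real^'n \<Rightarrow> real^'n"
  assumes MZ: "Z_matrix M" and P: "0 \<le> P" and MNP: "M = N - P"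
    and b1: "nonneg_bilinear b1" and b2: "nonneg_bilinear b2"
    and xs: "M *v xs = a + b1 xs xs + b2 xs xs" "\<forall>i. 0 < xs$i"
    and x: "0 \<le> x" "x \<le> xs" and z: "0 \<le> z"
    and rows: "\<And>i. z$i = 0 \<Longrightarrow> a$i = 0 \<and> (P *v xs)$i = 0 \<and> (b2 xs xs)$i = 0
                 \<and> (b1 xs (xs - x))$i = 0 \<and> (b1 z x)$i = 0 \<and> (\<forall>j. z$j \<noteq> 0 \<longrightarrow> N$i$j = 0)"
  defines "y \<equiv> \<chi> j. if z$j = 0 then xs$j / 2 else xs$j"
  shows "supersolution M a (\<lambda>x y. b1 x y + b2 x y) y"
proof -
  define r where "r = (\<chi> j. if z$j = 0 then 0 else xs$j)"
  have lin: "bilinear b1" using b1 by (simp add: nonneg_bilinear_def)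
  have r: "0 \<le> r" "r \<le> xs" and y: "0 \<le> y" "y \<le> xs"
    using xs(2) by (auto simp: vec_le_iff r_def y_def less_imp_le)
  have y_r: "y = (1/2) *\<^sub>R xs + (1/2) *\<^sub>R r" by (simp add: vec_eq_iff y_def r_def)
  obtain c where rc: "r \<le> c *\<^sub>R z" using dominated_by_support[OF z r(1)] by (auto simp: r_def)
  have "(a + b1 y y + b2 y y)$i \<le> (M *v y)$i" for i
  proof (cases "z$i = 0")
    case True
    note row = rows[OF True]
    have "0 \<le> (P *v y)$i" "(P *v y)$i \<le> (P *v xs)$i"
      using nonneg_matrix_mono[OF P y(1)] nonneg_matrix_mono[OF P y(2)] by (simp_all add: vec_le_iff)
    then have Py: "(P *v y)$i = 0" using row by linarith
    have Nr: "(N *v r)$i = 0" using row by (intro matrix_row_vanishes) (auto simp: r_def split: if_splits)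
    have Nxs: "(N *v xs)$i = (b1 xs xs)$i"
      using xs(1) row MNP by (simp add: matrix_vector_mult_diff_rdistrib vec_eq_iff diff_eq_eq)
    have Ny: "(N *v y)$i = (1/2) * (N *v xs)$i + (1/2) * (N *v r)$i"
      by (simp add: y_r matrix_vector_right_distrib matrix_vector_mult_scaleR)
    have My: "(M *v y)$i = (1/2) * (b1 xs xs)$i"
      using MNP Ny Py Nr Nxs by (simp add: matrix_vector_mult_diff_rdistrib)
    have "(b1 xs y)$i \<le> (b1 xs xs)$i" "(b1 r y)$i \<le> (b1 r xs)$i" "(b2 y y)$i \<le> (b2 xs xs)$i"
      using nonneg_bilinear_mono[OF b1 _ order_refl y] nonneg_bilinear_mono[OF b2 y y]
        xs(2) r(1) by (auto simp: vec_le_iff less_imp_le)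
    moreover have "(b1 r xs)$i \<le> 0" using nonneg_bilinear_row_on_support[OF b1 x r rc] row by simp
    moreover have "b1 y y = b1 ((1/2) *\<^sub>R xs + (1/2) *\<^sub>R r) y"
      by (rule arg_cong[where f = "\<lambda>u. b1 u y"], rule y_r)
    then have "b1 y y = (1/2) *\<^sub>R b1 xs y + (1/2) *\<^sub>R b1 r y"
      by (simp add: bilinear_ladd[OF lin] bilinear_lmul[OF lin])
    ultimately show ?thesis using My row by simp
  next
    case False
    then have "(M *v xs)$i \<le> (M *v y)$i" by (intro Z_matrix_row_mono[OF MZ y(2)]) (simp add: y_def)
    moreover have "b1 y y \<le> b1 xs xs" "b2 y y \<le> b2 xs xs"
      using nonneg_bilinear_mono[OF b1 y y] nonneg_bilinear_mono[OF b2 y y] by auto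
    ultimately show ?thesis using xs(1) by (simp add: vec_le_iff) (smt (verit))
  qed
  then show ?thesis using y(1) by (simp add: supersolution_def vec_le_iff add.assoc)
qed

lemma inverse_positive_below_minimal_solution:
  fixes M N P :: "real^'n^'n" and a xs x :: "real^'n"
    and b1 b2 :: "real^'n \<Rightarrow> real^'n \<Rightarrow> real^'n"
  assumes NZ: "Z_matrix N" and P: "0 \<le> P" and MNP: "M = N - P"
    and MZ: "Z_matrix M" and Minv: "invertible M"
    and b1: "nonneg_bilinear b1" and b2: "nonneg_bilinear b2" and a: "0 \<le> a"
    and xs: "is_minimal_solution M a (\<lambda>x y. b1 x y + b2 x y) xs" "\<forall>i. 0 < xs$i"
    and x: "0 \<le> x" "x \<le> xs"
  shows "inverse_positive (iter_matrix N b1 x)"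
  unfolding inverse_positive_def
proof (intro allI impI)
  let ?A = "iter_matrix N b1 x"
  fix v assume Av: "0 \<le> ?A *v v"
  show "0 \<le> v"
  proof (rule ccontr)
    assume "\<not> 0 \<le> v"
    then obtain t i0 where t: "t < 0" "0 \<le> v - t *\<^sub>R xs" "(v - t *\<^sub>R xs)$i0 = 0"
      using shift_to_boundary xs(2) by metis
    define z where "z = v - t *\<^sub>R xs"
    have xs0: "0 \<le> xs" using xs(2) by (simp add: vec_le_iff less_imp_le)
    have Mxs: "M *v xs = a + b1 xs xs + b2 xs xs"
      using xs(1) by (simp add: is_minimal_solution_def is_solution_def add.assoc)
    have terms: "0 \<le> P *v xs" "0 \<le> b2 xs xs" "0 \<le> b1 xs (xs - x)"
      using nonneg_matrix_mono[OF P xs0] b1 b2 xs0 x(2)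
      by (auto simp: nonneg_bilinear_def vec_le_iff)
    have Axs: "?A *v xs = a + P *v xs + b2 xs xs + b1 xs (xs - x)"
      using b1 MNP Mxs by (simp add: iter_matrix_at_solution nonneg_bilinear_def)
    \<comment> \<open>On the zero set of z all nonnegative contributions to the rows of A xs vanish.\<close>
    have rows: "a$i = 0 \<and> (P *v xs)$i = 0 \<and> (b2 xs xs)$i = 0 \<and> (b1 xs (xs - x))$i = 0
                \<and> (b1 z x)$i = 0 \<and> (\<forall>j. z$j \<noteq> 0 \<longrightarrow> N$i$j = 0)" if zi: "z$i = 0" for i
    proof -
      have Axs_i: "0 \<le> (?A *v xs)$i" using Axs a terms by (simp add: vec_le_iff)
      have Az: "(?A *v z)$i = (?A *v v)$i - t * (?A *v xs)$i"
        by (simp add: z_def matrix_vector_mult_diff_distrib matrix_vector_mult_scaleR)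
      moreover have "0 \<le> (?A *v v)$i" using Av by (simp add: vec_le_iff)
      moreover have "0 \<le> - t * (?A *v xs)$i" using t(1) Axs_i by (simp add: mult_nonpos_nonneg)
      ultimately have "0 \<le> (?A *v z)$i" by linarith
      note row = iter_matrix_row_at_zero[OF NZ b1 x(1) t(2)[folded z_def] zi this]
      have "(?A *v xs)$i = 0"
        using row(1) Az \<open>0 \<le> (?A *v v)$i\<close> Axs_i t(1) by (smt (verit) mult_neg_pos)
      then show ?thesis using Axs a terms row(2,3) by (simp add: vec_le_iff) (smt (verit))
    qed
    define y where "y = (\<chi> j. if z$j = 0 then xs$j / 2 else xs$j)"
    have "supersolution M a (\<lambda>x y. b1 x y + b2 x y) y"
      unfolding y_def
      by (rule halving_supersolution[OF MZ P MNP b1 b2 Mxs xs(2) x t(2)[folded z_def] rows])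
    then have "xs \<le> y"
      using minimal_solution_below_supersolution[OF MZ Minv nonneg_bilinear_add[OF b1 b2] a xs] by blast
    moreover have "y$i0 = xs$i0 / 2" using t(3) by (simp add: y_def z_def)
    ultimately have "xs$i0 \<le> xs$i0 / 2" by (metis vec_le_iff)
    then show False using xs(2)[rule_format, of i0] by linarith
  qed
qed

lemma Fmap_nonpos_iff: "Fmap M a b x \<le> 0 \<longleftrightarrow> M *v x \<le> a + b x x"
  unfolding Fmap_def vec_le_iff by (simp add: diff_le_eq add.commute)

theorem mainTheorem9:
  fixes M N P :: "real^'n^'n" and a x0 xs :: "real^'n"
    and b b1 b2 :: "real^'n \<Rightarrow> real^'n \<Rightarrow> real^'n"
  assumes M_nonsing: "M_matrix M" "invertible M"
    and a_nonneg: "0 \<le> a"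
    and b1_bil: "bilinear b1" and b1_nonneg: "\<And>x y. 0 \<le> x \<Longrightarrow> 0 \<le> y \<Longrightarrow> 0 \<le> b1 x y"
    and b2_bil: "bilinear b2" and b2_nonneg: "\<And>x y. 0 \<le> x \<Longrightarrow> 0 \<le> y \<Longrightarrow> 0 \<le> b2 x y"
    and b_def: "b = (\<lambda>x y. b1 x y + b2 x y)"
    and H: "hypH M a b xs"
    and N_M: "M_matrix N" and P_nonneg: "0 \<le> P" and splitting: "M = N - P"
    and x0_bounds: "0 \<le> x0" "x0 \<le> xs" and F_x0: "Fmap M a b x0 \<le> 0"
  shows "(\<forall>k. invertible (N - matrix (\<lambda>y. b1 y (iter_seq N P a b1 b2 x0 k))) \<and>
              (N - matrix (\<lambda>y. b1 y (iter_seq N P a b1 b2 x0 k))) *v iter_seq N P a b1 b2 x0 (Suc k)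
                = a + P *v iter_seq N P a b1 b2 x0 k
                  + b2 (iter_seq N P a b1 b2 x0 k) (iter_seq N P a b1 b2 x0 k))
       \<and> (\<forall>k. iter_seq N P a b1 b2 x0 k \<le> iter_seq N P a b1 b2 x0 (Suc k)
              \<and> iter_seq N P a b1 b2 x0 (Suc k) \<le> xs)
       \<and> (iter_seq N P a b1 b2 x0 \<longlonglongrightarrow> xs)
       \<and> (\<forall>k. Fmap M a b (iter_seq N P a b1 b2 x0 k) \<le> 0)"
proof -
  let ?X = "iter_seq N P a b1 b2 x0"
  have b1: "nonneg_bilinear b1" and b2: "nonneg_bilinear b2"
    using b1_bil b1_nonneg b2_bil b2_nonneg by (simp_all add: nonneg_bilinear_def)
  have xs: "is_minimal_solution M a (\<lambda>x y. b1 x y + b2 x y) xs" "\<forall>i. 0 < xs$i"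
    using H by (simp_all add: hypH_def b_def)
  have super: "supersolution M a (\<lambda>x y. b1 x y + b2 x y) xs"
    using xs(1) by (simp add: is_minimal_solution_def is_solution_def supersolution_def)
  have sub_x0: "M *v x0 \<le> a + b1 x0 x0 + b2 x0 x0"
    using F_x0 by (simp add: Fmap_nonpos_iff b_def add.assoc)
  have A: "\<forall>x\<in>{0..xs}. inverse_positive (iter_matrix N b1 x)"
    using inverse_positive_below_minimal_solution[OF M_matrix_imp_Z_matrix[OF N_M] P_nonneg splitting
        M_matrix_imp_Z_matrix[OF M_nonsing(1)] M_nonsing(2) b1 b2 a_nonneg xs] by simp
  note mono = iteration_monotone[OF b1 b2 P_nonneg splitting super x0_bounds sub_x0 A]
  obtain z where z: "?X \<longlonglongrightarrow> z" "z \<le> xs" "is_solution M a (\<lambda>x y. b1 x y + b2 x y) z"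
    using iteration_limit[OF b1 b2 P_nonneg splitting super x0_bounds sub_x0 A] by blast
  have "z = xs" using z(2,3) xs(1) by (simp add: is_minimal_solution_def antisym)
  moreover have "invertible (iter_matrix N b1 (?X k))" for k
    using A mono[of k] by (auto intro: inverse_positive_imp_invertible order_trans)
  ultimately show ?thesis
    using mono z(1) by (simp add: Fmap_nonpos_iff b_def add.assoc)
qed

end
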